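(* Let $\alpha\in(0,\pi/2]$ and define $$r(d)=\Big(16\sin^3\alpha\,d^2+30\big((3\cos\alpha-4)\sin\alpha+\alpha(4\cos\alpha-3)\big)\Big)^2,\qquad d\in\mathbb{R}.$$ Then $r$ has precisely one positive zero, which is a double zero, namely $$d_1=\frac{\sqrt{30}}{4}\sqrt{\frac{\alpha(3-4\cos\alpha)+(4-3\cos\alpha)\sin\alpha}{\sin^3\alpha}},$$ and it satisfies $d_1>\tfrac{5}{2}$.
   Context: The function $r$ arises as the resultant with respect to $u_1$ of the two polynomial equations in the system stated in this paper for the non-symmetric case of interpolating circular arc data by degree-7 Pythagorean-hodograph curves; only the explicit formula above is needed. *)

theory Defs
  imports Complex_Main "HOL-Computational_Algebra.Polynomial"
begin

definition r_poly :: "real \<Rightarrow> real poly" where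
  "r_poly a = ([: 30 * ((3 * cos a - 4) * sin a + a * (4 * cos a - 3)), 0, 16 * sin a ^ 3 :]) ^ 2"

end

theory Submission
  imports Defs
begin

text \<open>The polynomial is the square of the even quadratic \<open>B d\<^sup>2 - 30 N\<close> with
  \<open>B = 16 sin\<^sup>3 a > 0\<close> and \<open>N = a (3 - 4 cos a) + (4 - 3 cos a) sin a\<close>, so its only
  positive zero is \<open>d\<^sub>1 = sqrt (30 N / B)\<close>, of multiplicity two. The bound \<open>d\<^sub>1 > 5/2\<close>
  is equivalent to \<open>3 N > 10 sin\<^sup>3 a\<close>. Viewed as a function of \<open>a\<close>, the difference
  \<open>3 N - 10 sin\<^sup>3 a\<close> vanishes at 0 and has derivative \<open>6 sin a \<cdot> g a\<close> with \<open>g t = 2 t + 3 sin t - 5 sin t cos t\<close>;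
  in turn \<open>g 0 = 0\<close> and \<open>g' t = (1 - cos t) (7 + 10 cos t) > 0\<close> on \<open>(0, \<pi>/2)\<close>.\<close>

lemma two_x_plus_sin_mult_pos:
  fixes x :: real
  assumes "0 < x" "x \<le> pi / 2"
  shows "0 < 2 * x + 3 * sin x - 5 * sin x * cos x"
proof -
  let ?g = "\<lambda>t::real. 2 * t + 3 * sin t - 5 * sin t * cos t"
  have "?g 0 < ?g x"
  proof (rule DERIV_pos_imp_increasing_open[OF assms(1)])
    fix t :: real assume t: "0 < t" "t < x"
    have deriv: "DERIV ?g t :> 2 + 3 * cos t - 5 * (cos t * cos t - sin t * sin t)"
      by (auto intro!: derivative_eq_intros simp: algebra_simps)
    have "cos t < 1" using t assms cos_monotone_0_pi[of 0 t] by simp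
    moreover have "cos t > 0" using t assms by (intro cos_gt_zero_pi) auto
    moreover have "sin t * sin t = 1 - cos t * cos t"
      using sin_cos_squared_add[of t] by (simp add: power2_eq_square)
    then have "2 + 3 * cos t - 5 * (cos t * cos t - sin t * sin t)
        = (1 - cos t) * (7 + 10 * cos t)"
      by algebra
    ultimately show "\<exists>y. DERIV ?g t :> y \<and> y > 0" using deriv by auto
  qed (intro continuous_intros)
  then show ?thesis by simp
qed

lemma three_mult_gt_ten_sin_cube:
  fixes x :: real
  assumes "0 < x" "x \<le> pi / 2"
  shows "10 * sin x ^ 3 < 3 * (x * (3 - 4 * cos x) + (4 - 3 * cos x) * sin x)"
proof -
  let ?f = "\<lambda>t::real. 3 * (t * (3 - 4 * cos t) + (4 - 3 * cos t) * sin t) - 10 * sin t ^ 3"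
  have "?f 0 < ?f x"
  proof (rule DERIV_pos_imp_increasing_open[OF assms(1)])
    fix t :: real assume t: "0 < t" "t < x"
    have deriv: "DERIV ?f t :> 3 * ((3 - 4 * cos t) + t * (4 * sin t) + 3 * sin t * sin t
        + (4 - 3 * cos t) * cos t) - 10 * (3 * sin t ^ 2 * cos t)"
      by (auto intro!: derivative_eq_intros simp: algebra_simps power2_eq_square)
    have "sin t * sin t = 1 - cos t * cos t"
      using sin_cos_squared_add[of t] by (simp add: power2_eq_square)
    then have "3 * ((3 - 4 * cos t) + t * (4 * sin t) + 3 * sin t * sin t
        + (4 - 3 * cos t) * cos t) - 10 * (3 * sin t ^ 2 * cos t)
        = 6 * sin t * (2 * t + 3 * sin t - 5 * sin t * cos t)"
      by algebra
    moreover have "sin t > 0" using t assms by (intro sin_gt_zero) auto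
    ultimately show "\<exists>y. DERIV ?f t :> y \<and> y > 0"
      using deriv two_x_plus_sin_mult_pos[of t] t assms by auto
  qed (intro continuous_intros)
  then show ?thesis by simp
qed

lemma even_quadratic_eq_smult:
  fixes b c :: "'a::comm_ring_1"
  shows "[:- (b * c ^ 2), 0, b:] = smult b ([:- c, 1:] * [:c, 1:])"
  by (simp add: power2_eq_square)

lemma pos_roots_square_even_quadratic:
  fixes b c :: "'a::linordered_idom"
  assumes "b \<noteq> 0" "0 < c"
  shows "{d. 0 < d \<and> poly ([:- (b * c ^ 2), 0, b:] ^ 2) d = 0} = {c}"
proof -
  have "poly ([:- (b * c ^ 2), 0, b:] ^ 2) d = (b * ((d - c) * (d + c))) ^ 2" for d
    unfolding even_quadratic_eq_smult by (simp add: algebra_simps)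
  then show ?thesis using assms by (auto simp: add_eq_0_iff)
qed

lemma order_square_even_quadratic:
  fixes b c :: "'a::linordered_idom"
  assumes "b \<noteq> 0" "0 < c"
  shows "order c ([:- (b * c ^ 2), 0, b:] ^ 2) = 2"
proof -
  have nonzero: "[:- c, 1:] * [:c, 1:] \<noteq> 0" by simp
  have "order c [:- c, 1:] = 1" using order_power_n_n[of c 1] by simp
  moreover have "order c [:c, 1:] = 0" using assms(2) by (intro order_0I) simp
  ultimately have "order c [:- (b * c ^ 2), 0, b:] = 1"
    unfolding even_quadratic_eq_smult order_smult[OF assms(1)] order_mult[OF nonzero]
    by simp
  moreover have "[:- (b * c ^ 2), 0, b:] \<noteq> 0" using assms(1) by simp
  ultimately show ?thesis unfolding power2_eq_square by (subst order_mult) auto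
qed

lemma five_halves_less_scaled_sqrt:
  fixes q :: real
  assumes "10 / 3 < q"
  shows "5 / 2 < sqrt 30 / 4 * sqrt q"
proof -
  have "5 / 2 = sqrt 30 / 4 * sqrt (10 / 3)"
    by (simp flip: real_sqrt_mult)
  also have "\<dots> < sqrt 30 / 4 * sqrt q" using assms by simp
  finally show ?thesis .
qed

theorem lemma1:
  fixes a :: real
  assumes "0 < a" and "a \<le> pi / 2"
  defines "d1 \<equiv> sqrt 30 / 4 *
      sqrt ((a * (3 - 4 * cos a) + (4 - 3 * cos a) * sin a) / sin a ^ 3)"
  shows "{d. 0 < d \<and> poly (r_poly a) d = 0} = {d1}
         \<and> order d1 (r_poly a) = 2
         \<and> d1 > 5 / 2"
proof -
  define N where "N = a * (3 - 4 * cos a) + (4 - 3 * cos a) * sin a"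
  define B where "B = 16 * sin a ^ 3"
  have "sin a > 0" using assms by (intro sin_gt_zero) auto
  then have "B \<noteq> 0" unfolding B_def by simp
  have bound: "10 / 3 < N / sin a ^ 3"
    using three_mult_gt_ten_sin_cube[OF assms(1,2)] \<open>sin a > 0\<close>
    unfolding N_def by (simp add: field_simps)
  have d1_eq: "d1 = sqrt 30 / 4 * sqrt (N / sin a ^ 3)"
    unfolding d1_def N_def ..
  have d1_gt: "d1 > 5 / 2"
    using five_halves_less_scaled_sqrt[OF bound] unfolding d1_eq .
  then have d1_pos: "d1 > 0" by simp
  have "0 \<le> N / sin a ^ 3" using bound by linarith
  then have d1_sq: "d1 ^ 2 = 30 / 16 * (N / sin a ^ 3)"
    unfolding d1_eq power_mult_distrib real_sqrt_pow2[OF \<open>0 \<le> N / sin a ^ 3\<close>]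
    by (simp add: power_divide)
  have "B * d1 ^ 2 = 30 * N" using d1_sq \<open>sin a > 0\<close> unfolding B_def by (simp add: field_simps)
  then have "30 * ((3 * cos a - 4) * sin a + a * (4 * cos a - 3)) = - (B * d1 ^ 2)"
    unfolding N_def by (simp add: algebra_simps)
  then have "r_poly a = [:- (B * d1 ^ 2), 0, B:] ^ 2"
    unfolding r_poly_def B_def by simp
  then show ?thesis
    using pos_roots_square_even_quadratic[OF \<open>B \<noteq> 0\<close> d1_pos]
      order_square_even_quadratic[OF \<open>B \<noteq> 0\<close> d1_pos] d1_gt
    by simp
qed

end
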